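(* Let $X\subset\mathbb{P}^5$ be a smooth cubic fourfold over $\mathbb{C}$ containing an elliptic ruled surface $T$ of degree $6$, let $H$ be the hyperplane class of $X$, and let $S\in H^{2,2}(X,\mathbb{Z})$ be the class of a sextic del Pezzo surface as described in the context (so $H^2\cdot S=6$ and $S^2=18$). Let $c\in\{1,2\}$ and assume there is a class $\Sigma\in H^{2,2}(X,\mathbb{Z})$ with $\Sigma\cdot S=c$. Then one can choose $\Sigma\in H^{2,2}(X,\mathbb{Z})$ with $\Sigma\cdot S=c$ such that, for some integer $k$, the intersection matrix of the sublattice $\langle H^2,S,\Sigma\rangle$ (with respect to the ordered basis $H^2,S,\Sigma$) is one of \[\begin{pmatrix}3&6&0\\6&18&c\\0&c&2k\end{pmatrix},\qquad \begin{pmatrix}3&6&1\\6&18&c\\1&c&2k+1\end{pmatrix},\qquad \begin{pmatrix}3&6&2\\6&18&c\\2&c&2k\end{pmatrix}.\] In these three cases one has $\mathrm{disc}\langle H^2,S,\Sigma\rangle = 36k-3c^2$, $36k-3c^2+12c$, and $36k-3c^2+24c-72$ respectively.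
   Context: Let $p:\tilde X\to X$ be the blow-up of $X$ along $T$; then $\tilde X$ admits a del Pezzo fibration $\pi:\tilde X\to\mathbb{P}^2$ whose general fibres are sextic del Pezzo surfaces. Let $F\in H^4(\tilde X,\mathbb{Z})$ be the class of a fibre of $\pi$ and $S:=p_*F\in H^{2,2}(X,\mathbb{Z})$. The intersection form on $H^4(X,\mathbb{Z})$ is the cup product pairing; $\mathrm{disc}$ of a lattice denotes the determinant of its intersection matrix. *)

theory Defs
  imports "HOL-Analysis.Analysis"
begin

text \<open>Lattice-theoretic model of the middle cohomology H^4(X,Z) of a smooth cubic
fourfold X: an abelian group with a symmetric Z-bilinear form (cup product),
the square of the hyperplane class h2, and the subgroup of Hodge classes.\<close>

definition sym_bilinear :: "('a::ab_group_add \<Rightarrow> 'a \<Rightarrow> int) \<Rightarrow> bool" where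
  "sym_bilinear B \<longleftrightarrow> (\<forall>x y. B x y = B y x) \<and> (\<forall>x y z. B (x + y) z = B x z + B y z)"

definition subgroup_of :: "'a::ab_group_add set \<Rightarrow> bool" where
  "subgroup_of M \<longleftrightarrow> 0 \<in> M \<and> (\<forall>x\<in>M. \<forall>y\<in>M. x + y \<in> M) \<and> (\<forall>x\<in>M. - x \<in> M)"

definition gram3 :: "('a \<Rightarrow> 'a \<Rightarrow> int) \<Rightarrow> 'a \<Rightarrow> 'a \<Rightarrow> 'a \<Rightarrow> int^3^3" where
  "gram3 B x y z = (let v = (\<lambda>i::3. if i = 1 then x else if i = 2 then y else z)
                    in (\<chi> i j. B (v i) (v j)))"

end

theory Submission
  imports Defs
begin

text \<open>Since 3 h2 - S is orthogonal to S and pairs to 3 with h2, adding a multiple of it to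
\<Sigma> keeps \<Sigma> \<cdot> S = c and brings t = \<Sigma> \<cdot> h2 into {0, 1, 2}. The class 3\<Sigma> - t h2 is
orthogonal to h2, so its square 9 \<Sigma> \<cdot> \<Sigma> - 3 t^2 is even, i.e. \<Sigma> \<cdot> \<Sigma> \<equiv> t (mod 2).\<close>

definition int_mult :: "int \<Rightarrow> 'a::ab_group_add \<Rightarrow> 'a" where
  "int_mult n x = (if 0 \<le> n then ((+) x ^^ nat n) 0 else - (((+) x ^^ nat (- n)) 0))"

lemma subgroup_of_add: "subgroup_of M \<Longrightarrow> x \<in> M \<Longrightarrow> y \<in> M \<Longrightarrow> x + y \<in> M"
  and subgroup_of_minus: "subgroup_of M \<Longrightarrow> x \<in> M \<Longrightarrow> - x \<in> M"
  by (auto simp: subgroup_of_def)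

lemma subgroup_of_diff: "subgroup_of M \<Longrightarrow> x \<in> M \<Longrightarrow> y \<in> M \<Longrightarrow> x - y \<in> M"
  unfolding diff_conv_add_uminus by (intro subgroup_of_add subgroup_of_minus)

lemma subgroup_of_int_mult:
  assumes "subgroup_of M" "x \<in> M"
  shows "int_mult n x \<in> M"
proof -
  have "((+) x ^^ m) 0 \<in> M" for m
    using assms by (induction m) (auto simp: subgroup_of_def)
  then show ?thesis
    using assms(1) by (simp add: int_mult_def subgroup_of_minus)
qed

context
  fixes B :: "'a::ab_group_add \<Rightarrow> 'a \<Rightarrow> int"
  assumes bil: "sym_bilinear B"
begin

lemma sym_bilinear_commute: "B x y = B y x"
  using bil unfolding sym_bilinear_def by (elim conjE allE) assumption

lemma sym_bilinear_add_left: "B (x + y) z = B x z + B y z"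
  using bil unfolding sym_bilinear_def by (elim conjE allE) assumption

lemma sym_bilinear_minus_left: "B (- x) z = - B x z"
proof -
  have "B 0 z = 0"
    using sym_bilinear_add_left[of 0 0 z] by simp
  then show ?thesis
    using sym_bilinear_add_left[of x "- x" z] by simp
qed

lemma sym_bilinear_diff_left: "B (x - y) z = B x z - B y z"
  unfolding diff_conv_add_uminus by (simp only: sym_bilinear_add_left sym_bilinear_minus_left)

lemma sym_bilinear_diff_right: "B z (x - y) = B z x - B z y"
  using sym_bilinear_diff_left[of x y z] by (simp only: sym_bilinear_commute[of z])

lemma sym_bilinear_int_mult_left: "B (int_mult n x) z = n * B x z"
proof -
  have "B (((+) x ^^ m) 0) z = int m * B x z" for m
  proof (induction m)
    case 0
    show ?case
      using sym_bilinear_minus_left[of 0 z] by simp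
  next
    case (Suc m)
    then show ?case
      by (simp add: sym_bilinear_add_left algebra_simps)
  qed
  then show ?thesis
    by (simp add: int_mult_def sym_bilinear_minus_left)
qed

lemma sym_bilinear_int_mult_right: "B z (int_mult n x) = n * B z x"
  by (metis sym_bilinear_commute sym_bilinear_int_mult_left)

lemma reduce_pairing_mod:
  assumes M: "subgroup_of M" "\<Sigma> \<in> M" "u \<in> M"
    and uS: "B u S = 0" and uh: "B u h = m"
  obtains \<Sigma>' where "\<Sigma>' \<in> M" "B \<Sigma>' S = B \<Sigma> S" "B \<Sigma>' h = B \<Sigma> h mod m"
proof
  define \<Sigma>' where "\<Sigma>' = \<Sigma> - int_mult (B \<Sigma> h div m) u"
  show "\<Sigma>' \<in> M"
    unfolding \<Sigma>'_def using M by (intro subgroup_of_diff subgroup_of_int_mult)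
  show "B \<Sigma>' S = B \<Sigma> S"
    unfolding \<Sigma>'_def by (simp add: sym_bilinear_diff_left sym_bilinear_int_mult_left uS)
  show "B \<Sigma>' h = B \<Sigma> h mod m"
    unfolding \<Sigma>'_def by (simp add: sym_bilinear_diff_left sym_bilinear_int_mult_left uh
        minus_div_mult_eq_mod)
qed

lemma even_square_add_pairing:
  assumes char: "\<forall>x. B x h = 0 \<longrightarrow> even (B x x)" and odd: "odd (B h h)"
  shows "even (B \<Sigma> \<Sigma> + B \<Sigma> h)"
proof -
  define d where "d = B h h"
  define t where "t = B \<Sigma> h"
  define x where "x = int_mult d \<Sigma> - int_mult t h"
  have "B x h = 0"
    by (simp add: x_def d_def t_def sym_bilinear_diff_left sym_bilinear_int_mult_left)
  then have "even (B x x)"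
    using char by blast
  moreover have "B x x = d * (d * B \<Sigma> \<Sigma> - t * t)"
    by (simp add: x_def d_def t_def sym_bilinear_diff_left sym_bilinear_diff_right
        sym_bilinear_int_mult_left sym_bilinear_int_mult_right sym_bilinear_commute[of h \<Sigma>]
        algebra_simps)
  ultimately have "even (B \<Sigma> \<Sigma> - t * t)"
    using odd by (simp add: d_def)
  then show ?thesis
    by (simp add: t_def)
qed

lemma gram3_eq:
  "gram3 B x y z = vector [vector [B x x, B x y, B x z], vector [B x y, B y y, B y z],
     vector [B x z, B y z, B z z]]"
  by (simp add: gram3_def vec_eq_iff forall_3 sym_bilinear_commute[of y x]
      sym_bilinear_commute[of z x] sym_bilinear_commute[of z y])

end

lemma det_gram_normal_form:
  fixes c s t :: int
  shows "det (vector [vector [3, 6, t], vector [6, 18, c], vector [t, c, s]] :: int^3^3)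
    = 18 * s - 3 * c^2 + 12 * c * t - 18 * t^2"
  by (simp add: det_3 power2_eq_square algebra_simps)

lemma gram_normal_form_cases:
  fixes c s t :: int and G :: "int^3^3"
  assumes G: "G = vector [vector [3, 6, t], vector [6, 18, c], vector [t, c, s]]"
    and t: "t \<in> {0, 1, 2}" and parity: "even (s + t)"
  shows "\<exists>k.
     (G = vector [vector [3, 6, 0], vector [6, 18, c], vector [0, c, 2*k]]
        \<and> det G = 36*k - 3*c^2)
   \<or> (G = vector [vector [3, 6, 1], vector [6, 18, c], vector [1, c, 2*k+1]]
        \<and> det G = 36*k - 3*c^2 + 12*c)
   \<or> (G = vector [vector [3, 6, 2], vector [6, 18, c], vector [2, c, 2*k]]
        \<and> det G = 36*k - 3*c^2 + 24*c - 72)"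
proof -
  consider "t = 0" "even s" | "t = 1" "odd s" | "t = 2" "even s"
    using t parity by fastforce
  then show ?thesis
  proof cases
    case 1
    then obtain k where "s = 2 * k" by blast
    then show ?thesis
      using 1 by (intro exI[of _ k]) (simp add: G det_gram_normal_form)
  next
    case 2
    then obtain k where "s = 2 * k + 1" by (blast elim: oddE)
    then show ?thesis
      using 2 by (intro exI[of _ k]) (simp add: G det_gram_normal_form)
  next
    case 3
    then obtain k where "s = 2 * k" by blast
    then show ?thesis
      using 3 by (intro exI[of _ k]) (simp add: G det_gram_normal_form)
  qed
qed

theorem lemma2p4:
  fixes B :: "'a::ab_group_add \<Rightarrow> 'a \<Rightarrow> int"
    and Hdg :: "'a set" and h2 S :: 'a and c :: int
  assumes bil: "sym_bilinear B"
    and h2_char: "\<forall>x. B x h2 = 0 \<longrightarrow> even (B x x)"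
    and Hdg: "subgroup_of Hdg" "h2 \<in> Hdg" "S \<in> Hdg"
    and h2h2: "B h2 h2 = 3" and h2S: "B h2 S = 6" and SS: "B S S = 18"
    and c: "c \<in> {1, 2}"
    and ex: "\<exists>\<Sigma>\<in>Hdg. B \<Sigma> S = c"
  shows "\<exists>\<Sigma>\<in>Hdg. B \<Sigma> S = c \<and> (\<exists>k::int.
     (gram3 B h2 S \<Sigma> = vector [vector [3, 6, 0], vector [6, 18, c], vector [0, c, 2*k]]
        \<and> det (gram3 B h2 S \<Sigma>) = 36*k - 3*c^2)
   \<or> (gram3 B h2 S \<Sigma> = vector [vector [3, 6, 1], vector [6, 18, c], vector [1, c, 2*k+1]]
        \<and> det (gram3 B h2 S \<Sigma>) = 36*k - 3*c^2 + 12*c)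
   \<or> (gram3 B h2 S \<Sigma> = vector [vector [3, 6, 2], vector [6, 18, c], vector [2, c, 2*k]]
        \<and> det (gram3 B h2 S \<Sigma>) = 36*k - 3*c^2 + 24*c - 72))"
proof -
  obtain \<Sigma>\<^sub>0 where "\<Sigma>\<^sub>0 \<in> Hdg" "B \<Sigma>\<^sub>0 S = c"
    using ex by blast
  moreover have "int_mult 3 h2 - S \<in> Hdg"
    using Hdg by (intro subgroup_of_diff subgroup_of_int_mult)
  moreover have "B (int_mult 3 h2 - S) S = 0" "B (int_mult 3 h2 - S) h2 = 3"
    using h2h2 h2S SS by (simp_all add: sym_bilinear_diff_left[OF bil]
        sym_bilinear_int_mult_left[OF bil] sym_bilinear_commute[OF bil, of S h2])
  ultimately obtain \<Sigma> where \<Sigma>: "\<Sigma> \<in> Hdg" "B \<Sigma> S = c" "B \<Sigma> h2 = B \<Sigma>\<^sub>0 h2 mod 3"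
    using reduce_pairing_mod[OF bil Hdg(1)] by metis
  have gram: "gram3 B h2 S \<Sigma> =
      vector [vector [3, 6, B \<Sigma> h2], vector [6, 18, c], vector [B \<Sigma> h2, c, B \<Sigma> \<Sigma>]]"
    by (simp add: gram3_eq[OF bil] h2h2 h2S SS \<Sigma>(2) sym_bilinear_commute[OF bil, of h2 \<Sigma>]
        sym_bilinear_commute[OF bil, of S \<Sigma>])
  have "B \<Sigma> h2 \<in> {0, 1, 2}"
    unfolding \<Sigma>(3) by auto
  moreover have "even (B \<Sigma> \<Sigma> + B \<Sigma> h2)"
    using even_square_add_pairing[OF bil h2_char] h2h2 by simp
  ultimately show ?thesis
    using \<Sigma>(1,2) gram_normal_form_cases[OF gram] by blast
qed

end
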